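(* Let $w$ be a Robinsonian graphon satisfying Assumptions (A1)–(A4). Then the Fiedler value $\lambda_2$ of $\mathbb{L}$ does not belong to the range $\mathrm{rg}(d)=\{d(x):x\in[0,1]\}$ of the degree function.
   Context: A graphon is a measurable symmetric function $w:[0,1]^2\to[0,1]$. It is Robinsonian if for all $x,y,z\in[0,1]$: $y<z<x\Rightarrow w(x,y)\le w(x,z)$ and $x<y<z\Rightarrow w(x,y)\ge w(x,z)$. The degree function is $d(x)=\int_0^1 w(x,y)\,dy$. The graphon-Laplacian is $(\mathbb{L}f)(x)=\int_0^1 w(x,y)(f(x)-f(y))\,dy$ on $L^2([0,1])$; its isolated eigenvalues of finite multiplicity are listed increasingly as $0=\lambda_1<\lambda_2<\cdots$, and $\lambda_2$ is the Fiedler value. Assumptions: (A1) there is $K>0$ with $|w(x,y)-w(x',y')|\le K(|x-x'|+|y-y'|)$; (A2) for every $x$, $\partial w(x,y)/\partial x$ exists and is non-zero for almost every $y$; (A3) $d'(x)$ exists for all $x\in[0,1]$ and $\{x: d'(x)=0\}$ is countable; (A4) with $\mathcal{H}=\{f\in L^2([0,1]):\int_0^1 f=0,\ \int_0^1 f^2=1\}$, $\inf_{f\in\mathcal{H}}\langle \mathbb{L}f,f\rangle<\inf_{x\in[0,1]}d(x)$. *)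

theory Defs
  imports "HOL-Analysis.Analysis"
begin

abbreviation I01 :: "real measure" where
  "I01 \<equiv> lebesgue_on {0..1}"

definition graphon :: "(real \<Rightarrow> real \<Rightarrow> real) \<Rightarrow> bool" where
  "graphon w \<longleftrightarrow>
     (\<lambda>(x,y). w x y) \<in> borel_measurable (lebesgue_on ({0..1} \<times> {0..1}))
   \<and> (\<forall>x\<in>{0..1}. \<forall>y\<in>{0..1}. w x y = w y x \<and> 0 \<le> w x y \<and> w x y \<le> 1)"

definition robinsonian :: "(real \<Rightarrow> real \<Rightarrow> real) \<Rightarrow> bool" where
  "robinsonian w \<longleftrightarrow>
     (\<forall>x\<in>{0..1}. \<forall>y\<in>{0..1}. \<forall>z\<in>{0..1}.
        (y < z \<and> z < x \<longrightarrow> w x y \<le> w x z) \<and> (x < y \<and> y < z \<longrightarrow> w x y \<ge> w x z))"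

definition deg :: "(real \<Rightarrow> real \<Rightarrow> real) \<Rightarrow> real \<Rightarrow> real" where
  "deg w x = (LINT y|I01. w x y)"

definition lap :: "(real \<Rightarrow> real \<Rightarrow> real) \<Rightarrow> (real \<Rightarrow> real) \<Rightarrow> real \<Rightarrow> real" where
  "lap w f x = (LINT y|I01. w x y * (f x - f y))"

text \<open>Membership in L^2([0,1]) (elements are represented by functions; equality is a.e.).\<close>
definition L2 :: "(real \<Rightarrow> real) \<Rightarrow> bool" where
  "L2 f \<longleftrightarrow> f \<in> borel_measurable I01 \<and> integrable I01 (\<lambda>x. (f x)\<^sup>2)"

definition eigvec :: "(real \<Rightarrow> real \<Rightarrow> real) \<Rightarrow> real \<Rightarrow> (real \<Rightarrow> real) \<Rightarrow> bool" where
  "eigvec w lam f \<longleftrightarrow> L2 f \<and> (AE x in I01. lap w f x = lam * f x)"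

definition is_eigenvalue :: "(real \<Rightarrow> real \<Rightarrow> real) \<Rightarrow> real \<Rightarrow> bool" where
  "is_eigenvalue w lam \<longleftrightarrow> (\<exists>f. eigvec w lam f \<and> \<not> (AE x in I01. f x = 0))"

text \<open>L is bounded and self-adjoint, so its spectrum is real and
  bijectivity is equivalent to bounded invertibility.\<close>
definition spec :: "(real \<Rightarrow> real \<Rightarrow> real) \<Rightarrow> real set" where
  "spec w = {lam. \<not> ((\<forall>f. L2 f \<and> (AE x in I01. lap w f x - lam * f x = 0) \<longrightarrow> (AE x in I01. f x = 0))
                    \<and> (\<forall>g. L2 g \<longrightarrow> (\<exists>f. L2 f \<and> (AE x in I01. lap w f x - lam * f x = g x))))}"

definition finite_multiplicity :: "(real \<Rightarrow> real \<Rightarrow> real) \<Rightarrow> real \<Rightarrow> bool" where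
  "finite_multiplicity w lam \<longleftrightarrow>
     (\<exists>B. finite B \<and> (\<forall>f\<in>B. eigvec w lam f) \<and>
          (\<forall>g. eigvec w lam g \<longrightarrow> (\<exists>c. AE x in I01. g x = (\<Sum>f\<in>B. c f * f x))))"

definition disc_eigenvalues :: "(real \<Rightarrow> real \<Rightarrow> real) \<Rightarrow> real set" where
  "disc_eigenvalues w = {lam. is_eigenvalue w lam
        \<and> (\<exists>e>0. \<forall>\<mu>\<in>spec w. \<bar>\<mu> - lam\<bar> < e \<longrightarrow> \<mu> = lam)
        \<and> finite_multiplicity w lam}"

text \<open>The Fiedler value lambda_2: the second element of the increasing enumeration
  lambda_1 < lambda_2 < ... of the isolated eigenvalues of finite multiplicity.\<close>
definition fiedler_value :: "(real \<Rightarrow> real \<Rightarrow> real) \<Rightarrow> real \<Rightarrow> bool" where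
  "fiedler_value w lam \<longleftrightarrow> lam \<in> disc_eigenvalues w \<and> (\<exists>!\<mu>. \<mu> \<in> disc_eigenvalues w \<and> \<mu> < lam)"

definition assm_A1 :: "(real \<Rightarrow> real \<Rightarrow> real) \<Rightarrow> bool" where
  "assm_A1 w \<longleftrightarrow> (\<exists>K>0. \<forall>x\<in>{0..1}. \<forall>y\<in>{0..1}. \<forall>x'\<in>{0..1}. \<forall>y'\<in>{0..1}.
      \<bar>w x y - w x' y'\<bar> \<le> K * (\<bar>x - x'\<bar> + \<bar>y - y'\<bar>))"

definition assm_A2 :: "(real \<Rightarrow> real \<Rightarrow> real) \<Rightarrow> bool" where
  "assm_A2 w \<longleftrightarrow> (\<forall>x\<in>{0..1}. AE y in I01.
      \<exists>D. ((\<lambda>t. w t y) has_real_derivative D) (at x within {0..1}) \<and> D \<noteq> 0)"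

definition assm_A3 :: "(real \<Rightarrow> real \<Rightarrow> real) \<Rightarrow> bool" where
  "assm_A3 w \<longleftrightarrow> (\<forall>x\<in>{0..1}. deg w differentiable (at x within {0..1}))
      \<and> countable {x\<in>{0..1}. (deg w has_real_derivative 0) (at x within {0..1})}"

definition assm_A4 :: "(real \<Rightarrow> real \<Rightarrow> real) \<Rightarrow> bool" where
  "assm_A4 w \<longleftrightarrow>
     Inf {(LINT x|I01. lap w f x * f x) | f. L2 f \<and> (LINT x|I01. f x) = 0 \<and> (LINT x|I01. (f x)\<^sup>2) = 1}
       < Inf (deg w ` {0..1})"

end

theory Submission
  imports Defs
begin

text \<open>Only the Lipschitz condition (A1) and the countability part of (A3) are needed. Every value \<open>d(x\<^sub>0)\<close> with \<open>0 < x\<^sub>0 < 1\<close> lies in the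
  spectrum: writing \<open>\<bbbL>f = d f - W f\<close>, a solution of \<open>(\<bbbL> - d(x\<^sub>0)) f = g\<close> for the sign step \<open>g\<close> at
  \<open>x\<^sub>0\<close> satisfies \<open>(d(x) - d(x\<^sub>0)) f(x) = g(x) + W f(x)\<close>, where \<open>W f\<close> is Lipschitz. On a
  one-sided neighbourhood of length \<open>\<eta>\<close> of \<open>x\<^sub>0\<close> the right-hand side stays \<open>\<ge> 1/2\<close> in modulus
  while \<open>|d(x) - d(x\<^sub>0)| \<le> K\<eta>\<close>, so \<open>\<integral>f\<^sup>2 \<ge> 1/(4K\<^sup>2\<eta>)\<close>, which is unbounded as \<open>\<eta> \<rightarrow> 0\<close>.
  Since \<open>d\<close> is continuous and, by (A3), constant on no interval, any value \<open>d(x\<^sub>1)\<close> is a limit of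
  different values \<open>d(x\<^sub>0)\<close> in the spectrum, so it cannot be an isolated point of the spectrum.\<close>

definition lipschitz_kernel :: "real \<Rightarrow> (real \<Rightarrow> real \<Rightarrow> real) \<Rightarrow> bool" where
  "lipschitz_kernel K w \<longleftrightarrow> (\<forall>x\<in>{0..1}. \<forall>y\<in>{0..1}. \<forall>x'\<in>{0..1}. \<forall>y'\<in>{0..1}.
      \<bar>w x y - w x' y'\<bar> \<le> K * (\<bar>x - x'\<bar> + \<bar>y - y'\<bar>))"

definition graphon_operator :: "(real \<Rightarrow> real \<Rightarrow> real) \<Rightarrow> (real \<Rightarrow> real) \<Rightarrow> real \<Rightarrow> real" where
  "graphon_operator w f x = (LINT y|I01. w x y * f y)"

definition sign_step :: "real \<Rightarrow> real \<Rightarrow> real" where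
  "sign_step x\<^sub>0 x = (if x\<^sub>0 < x then 1 else -1)"

lemma lipschitz_kernelD:
  "lipschitz_kernel K w \<Longrightarrow> x \<in> {0..1} \<Longrightarrow> y \<in> {0..1} \<Longrightarrow> x' \<in> {0..1} \<Longrightarrow> y' \<in> {0..1} \<Longrightarrow>
    \<bar>w x y - w x' y'\<bar> \<le> K * (\<bar>x - x'\<bar> + \<bar>y - y'\<bar>)"
  unfolding lipschitz_kernel_def by blast

lemma finite_measure_I01: "finite_measure I01"
  by (rule finite_measure_lebesgue_on) simp

lemma integrable_I01_const [simp]: "integrable I01 (\<lambda>_. c :: real)"
  using finite_measure.integrable_const[OF finite_measure_I01] by blast

lemma L2_imp_integrable: "L2 f \<Longrightarrow> integrable I01 f"
  unfolding L2_def
  by (auto intro: finite_measure.square_integrable_imp_integrable[OF finite_measure_I01])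

lemma measure_I01_interval:
  assumes "a \<le> b" "{a<..<b} \<subseteq> {0..1}"
  shows "measure I01 {a<..<b} = b - a"
proof -
  have "measure I01 {a<..<b} = measure lebesgue {a<..<b}"
    using assms(2) by (intro measure_restrict_space) auto
  also have "\<dots> = measure lborel {a<..<b}" by (rule measure_completion) simp
  also have "\<dots> = b - a" using assms(1) by (rule measure_lborel_Ioo)
  finally show ?thesis .
qed

lemma integral_ge_on_interval:
  fixes F :: "real \<Rightarrow> real"
  assumes "a \<le> b" "{a<..<b} \<subseteq> {0..1}" "integrable I01 F"
    and "AE x in I01. c * indicator {a<..<b} x \<le> F x"
  shows "c * (b - a) \<le> (LINT x|I01. F x)"
proof -
  have sets: "{a<..<b} \<in> sets I01"
    using assms(2) by (simp add: sets_restrict_space_iff)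
  then have "integrable I01 (\<lambda>x. c * indicator {a<..<b} x)"
    using finite_measure_I01
    by (intro integrable_mult_right integrable_real_indicator)
       (auto simp: finite_measure.emeasure_finite less_top[symmetric])
  then have "(LINT x|I01. c * indicator {a<..<b} x) \<le> (LINT x|I01. F x)"
    using assms(3,4) by (rule integral_mono_AE)
  moreover have "(LINT x|I01. c * indicator {a<..<b} x) = c * (b - a)"
    using measure_I01_interval[OF assms(1,2)] sets assms(2) by (simp add: Int_absorb2)
  ultimately show ?thesis by linarith
qed

lemma lipschitz_kernel_section:
  assumes "lipschitz_kernel K w" "0 \<le> K" "x \<in> {0..1}"
  shows "K-lipschitz_on {0..1} (w x)"
proof (rule lipschitz_onI)
  fix y y' :: real assume "y \<in> {0..1}" "y' \<in> {0..1}"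
  then show "dist (w x y) (w x y') \<le> K * dist y y'"
    using lipschitz_kernelD[OF assms(1,3) _ assms(3)] by (simp add: dist_real_def)
qed (fact assms(2))

lemma measurable_kernel_section:
  assumes "lipschitz_kernel K w" "0 \<le> K" "x \<in> {0..1}"
  shows "w x \<in> borel_measurable I01"
  using lipschitz_on_continuous_on[OF lipschitz_kernel_section[OF assms]]
  by (rule continuous_imp_measurable_on_sets_lebesgue) simp

lemma integrable_kernel_mult:
  assumes "graphon w" "lipschitz_kernel K w" "0 \<le> K" "x \<in> {0..1}" "integrable I01 f"
  shows "integrable I01 (\<lambda>y. w x y * f y)"
proof (rule Bochner_Integration.integrable_bound[OF assms(5)])
  show "(\<lambda>y. w x y * f y) \<in> borel_measurable I01"
    using measurable_kernel_section[OF assms(2-4)] assms(5) by measurable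
  show "AE y in I01. norm (w x y * f y) \<le> norm (f y)"
  proof (rule AE_I2)
    fix y assume "y \<in> space I01"
    then have "0 \<le> w x y" "w x y \<le> 1" using assms(1,4) unfolding graphon_def by auto
    then show "norm (w x y * f y) \<le> norm (f y)"
      by (simp add: abs_mult mult_left_le_one_le)
  qed
qed

lemma lap_eq_deg_minus_graphon_operator:
  assumes "graphon w" "lipschitz_kernel K w" "0 \<le> K" "x \<in> {0..1}" "integrable I01 f"
  shows "lap w f x = deg w x * f x - graphon_operator w f x"
proof -
  have "lap w f x = (LINT y|I01. w x y * f x - w x y * f y)"
    unfolding lap_def by (simp add: algebra_simps)
  also have "\<dots> = (LINT y|I01. w x y) * f x - graphon_operator w f x"
    using integrable_kernel_mult[OF assms(1-4) integrable_I01_const[of 1]]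
      integrable_kernel_mult[OF assms]
    unfolding graphon_operator_def by (subst Bochner_Integration.integral_diff) auto
  finally show ?thesis unfolding deg_def .
qed

lemma graphon_operator_lipschitz:
  assumes "graphon w" "lipschitz_kernel K w" "0 \<le> K" "x \<in> {0..1}" "x' \<in> {0..1}"
    and f: "integrable I01 f"
  shows "\<bar>graphon_operator w f x - graphon_operator w f x'\<bar> \<le> K * \<bar>x - x'\<bar> * (LINT y|I01. \<bar>f y\<bar>)"
proof -
  have int: "integrable I01 (\<lambda>y. w x y * f y)" "integrable I01 (\<lambda>y. w x' y * f y)"
    using integrable_kernel_mult[OF assms(1-3) _ f] assms(4,5) by auto
  have "graphon_operator w f x - graphon_operator w f x' = (LINT y|I01. (w x y - w x' y) * f y)"
    unfolding graphon_operator_def using int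
    by (subst Bochner_Integration.integral_diff[symmetric]) (auto simp: algebra_simps)
  also have "\<bar>\<dots>\<bar> \<le> (LINT y|I01. \<bar>(w x y - w x' y) * f y\<bar>)"
    by (rule integral_abs_bound)
  also have "\<dots> \<le> (LINT y|I01. K * \<bar>x - x'\<bar> * \<bar>f y\<bar>)"
  proof (rule Bochner_Integration.integral_mono)
    show "integrable I01 (\<lambda>y. \<bar>(w x y - w x' y) * f y\<bar>)"
      using int by (intro integrable_abs) (auto simp: left_diff_distrib)
    fix y assume "y \<in> space I01"
    then have "\<bar>w x y - w x' y\<bar> \<le> K * \<bar>x - x'\<bar>"
      using lipschitz_kernelD[OF assms(2,4) _ assms(5), of y y] by simp
    then show "\<bar>(w x y - w x' y) * f y\<bar> \<le> K * \<bar>x - x'\<bar> * \<bar>f y\<bar>"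
      by (simp add: abs_mult mult_right_mono)
  qed (use f in auto)
  finally show ?thesis by simp
qed

lemma deg_lipschitz:
  assumes "graphon w" "lipschitz_kernel K w" "0 \<le> K" "x \<in> {0..1}" "x' \<in> {0..1}"
  shows "\<bar>deg w x - deg w x'\<bar> \<le> K * \<bar>x - x'\<bar>"
proof -
  have "deg w = graphon_operator w (\<lambda>_. 1)"
    unfolding deg_def graphon_operator_def by auto
  moreover have "(LINT y|I01. \<bar>1::real\<bar>) = 1"
    by (simp add: measure_restrict_space)
  ultimately show ?thesis
    using graphon_operator_lipschitz[OF assms integrable_I01_const[of 1]] by simp
qed

lemma sign_step_interval:
  fixes h :: "real \<Rightarrow> real"
  assumes \<eta>: "0 < \<eta>" "\<eta> \<le> x\<^sub>0" "\<eta> \<le> 1 - x\<^sub>0" and M: "0 \<le> M" "M * \<eta> \<le> 1 / 2"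
    and h: "\<And>x. x \<in> {0..1} \<Longrightarrow> \<bar>h x - h x\<^sub>0\<bar> \<le> M * \<bar>x - x\<^sub>0\<bar>"
  obtains a b where "{a<..<b} \<subseteq> {0..1}" "b - a = \<eta>"
    and "\<And>x. x \<in> {a<..<b} \<Longrightarrow> \<bar>x - x\<^sub>0\<bar> \<le> \<eta>"
    and "\<And>x. x \<in> {a<..<b} \<Longrightarrow> 1 / 2 \<le> \<bar>sign_step x\<^sub>0 x + h x\<bar>"
proof -
  have near: "h x\<^sub>0 - 1 / 2 \<le> h x \<and> h x \<le> h x\<^sub>0 + 1 / 2"
    if "x \<in> {0..1}" "\<bar>x - x\<^sub>0\<bar> \<le> \<eta>" for x
  proof -
    have "M * \<bar>x - x\<^sub>0\<bar> \<le> M * \<eta>" using that(2) M(1) by (rule mult_left_mono)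
    then show ?thesis using h[OF that(1)] M(2) by linarith
  qed
  \<comment> \<open>Take the side of \<open>x\<^sub>0\<close> on which the step has the sign of \<open>h x\<^sub>0\<close>.\<close>
  show ?thesis
  proof (cases "0 \<le> h x\<^sub>0")
    case True
    show ?thesis
    proof (rule that[of x\<^sub>0 "x\<^sub>0 + \<eta>"])
      fix x assume x: "x \<in> {x\<^sub>0<..<x\<^sub>0 + \<eta>}"
      have "sign_step x\<^sub>0 x = 1" using x by (auto simp: sign_step_def)
      moreover have "h x\<^sub>0 - 1 / 2 \<le> h x \<and> h x \<le> h x\<^sub>0 + 1 / 2" using x \<eta> by (intro near) auto
      ultimately show "1 / 2 \<le> \<bar>sign_step x\<^sub>0 x + h x\<bar>" using True by linarith
    qed (use \<eta> in auto)
  next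
    case False
    show ?thesis
    proof (rule that[of "x\<^sub>0 - \<eta>" x\<^sub>0])
      fix x assume x: "x \<in> {x\<^sub>0 - \<eta><..<x\<^sub>0}"
      have "sign_step x\<^sub>0 x = -1" using x by (auto simp: sign_step_def)
      moreover have "h x\<^sub>0 - 1 / 2 \<le> h x \<and> h x \<le> h x\<^sub>0 + 1 / 2" using x \<eta> by (intro near) auto
      ultimately show "1 / 2 \<le> \<bar>sign_step x\<^sub>0 x + h x\<bar>" using False by linarith
    qed (use \<eta> in auto)
  qed
qed

lemma square_ge_of_abs_mult_ge:
  fixes d y e :: real
  assumes "1 / 2 \<le> \<bar>d * y\<bar>" "\<bar>d\<bar> \<le> e" "0 < e"
  shows "1 / (4 * e\<^sup>2) \<le> y\<^sup>2"
proof -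
  have "1 / 2 \<le> e * \<bar>y\<bar>"
    using assms(1) mult_right_mono[OF assms(2) abs_ge_zero[of y]] by (simp add: abs_mult)
  then have "(1 / 2)\<^sup>2 \<le> (e * \<bar>y\<bar>)\<^sup>2" by (intro power_mono) auto
  then have "1 / 4 \<le> e\<^sup>2 * y\<^sup>2" by (simp add: power_mult_distrib power_divide)
  then show ?thesis using assms(3) by (simp add: divide_le_eq mult_ac)
qed

lemma solution_square_ge_on_interval:
  assumes gr: "graphon w" and lip: "lipschitz_kernel K w" and K: "0 < K"
    and x\<^sub>0: "x\<^sub>0 \<in> {0..1}" and fi: "integrable I01 f"
    and eq: "AE x in I01. lap w f x - deg w x\<^sub>0 * f x = g x" and \<eta>: "0 < \<eta>"
    and near: "\<And>x. x \<in> {a<..<b} \<Longrightarrow> \<bar>x - x\<^sub>0\<bar> \<le> \<eta>"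
    and big: "\<And>x. x \<in> {a<..<b} \<Longrightarrow> 1 / 2 \<le> \<bar>g x + graphon_operator w f x\<bar>"
  shows "AE x in I01. 1 / (4 * (K * \<eta>)\<^sup>2) * indicator {a<..<b} x \<le> (f x)\<^sup>2"
  using eq
proof (rule AE_mp, intro AE_I2 impI)
  fix x assume x: "x \<in> space I01" and ex: "lap w f x - deg w x\<^sub>0 * f x = g x"
  show "1 / (4 * (K * \<eta>)\<^sup>2) * indicator {a<..<b} x \<le> (f x)\<^sup>2"
  proof (cases "x \<in> {a<..<b}")
    case True
    have "(deg w x - deg w x\<^sub>0) * f x = g x + graphon_operator w f x"
      using ex x lap_eq_deg_minus_graphon_operator[OF gr lip _ _ fi, of x] K
      by (simp add: algebra_simps)
    then have "1 / 2 \<le> \<bar>(deg w x - deg w x\<^sub>0) * f x\<bar>" using big[OF True] by simp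
    moreover have "\<bar>deg w x - deg w x\<^sub>0\<bar> \<le> K * \<eta>"
      using deg_lipschitz[OF gr lip _ _ x\<^sub>0, of x] x K near[OF True]
      by (auto intro: order_trans mult_left_mono)
    ultimately have "1 / (4 * (K * \<eta>)\<^sup>2) \<le> (f x)\<^sup>2"
      using K \<eta> by (intro square_ge_of_abs_mult_ge) auto
    then show ?thesis using True by simp
  qed simp
qed

lemma L2_sign_step: "L2 (sign_step x\<^sub>0)"
proof -
  have [measurable]: "(\<lambda>x::real. x) \<in> borel_measurable I01"
    by (rule continuous_imp_measurable_on_sets_lebesgue) (auto intro: continuous_intros)
  have "sign_step x\<^sub>0 \<in> borel_measurable I01" unfolding sign_step_def by measurable
  moreover have "(\<lambda>x. (sign_step x\<^sub>0 x)\<^sup>2) = (\<lambda>_. 1)" by (simp add: sign_step_def fun_eq_iff)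
  ultimately show ?thesis unfolding L2_def by simp
qed

lemma sign_step_notin_range_lap_minus_deg:
  assumes gr: "graphon w" and lip: "lipschitz_kernel K w" and K: "0 < K"
    and x\<^sub>0: "x\<^sub>0 \<in> {0<..<1}" and f: "L2 f"
    and eq: "AE x in I01. lap w f x - deg w x\<^sub>0 * f x = sign_step x\<^sub>0 x"
  shows False
proof -
  have fi: "integrable I01 f" using L2_imp_integrable[OF f] .
  have x\<^sub>0': "x\<^sub>0 \<in> {0..1}" using x\<^sub>0 by auto
  define A where "A = (LINT y|I01. \<bar>f y\<bar>)"
  define Q where "Q = (LINT x|I01. (f x)\<^sup>2)"
  have A: "0 \<le> A" and Q: "0 \<le> Q" unfolding A_def Q_def by simp_all
  \<comment> \<open>The third bound keeps \<open>W f\<close> within \<open>1/2\<close> of its value at \<open>x\<^sub>0\<close>; the fourth makes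
    the resulting lower bound \<open>1/(4K\<^sup>2\<eta>)\<close> for \<open>\<integral>f\<^sup>2\<close> exceed \<open>Q\<close>.\<close>
  define \<eta> where "\<eta> = min (min x\<^sub>0 (1 - x\<^sub>0)) (min (1 / (2 * K * A + 1)) (1 / (4 * K\<^sup>2 * (Q + 1))))"
  have \<eta>: "0 < \<eta>" "\<eta> \<le> x\<^sub>0" "\<eta> \<le> 1 - x\<^sub>0"
    unfolding \<eta>_def using x\<^sub>0 K A Q by (auto simp: add_nonneg_pos)
  have "K * A * \<eta> \<le> K * A * (1 / (2 * K * A + 1))"
    using K A unfolding \<eta>_def by (intro mult_left_mono) auto
  also have "\<dots> \<le> 1 / 2"
    using K A add_pos_nonneg[of 1 "2 * K * A"] by (simp add: divide_simps)
  finally have KA: "K * A * \<eta> \<le> 1 / 2" .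
  have lipW: "\<bar>graphon_operator w f x - graphon_operator w f x\<^sub>0\<bar> \<le> K * A * \<bar>x - x\<^sub>0\<bar>"
    if "x \<in> {0..1}" for x
    using graphon_operator_lipschitz[OF gr lip _ that x\<^sub>0' fi] K unfolding A_def by (simp add: mult_ac)
  obtain a b where ab: "{a<..<b} \<subseteq> {0..1}" "b - a = \<eta>"
    and near: "\<And>x. x \<in> {a<..<b} \<Longrightarrow> \<bar>x - x\<^sub>0\<bar> \<le> \<eta>"
    and big: "\<And>x. x \<in> {a<..<b} \<Longrightarrow> 1 / 2 \<le> \<bar>sign_step x\<^sub>0 x + graphon_operator w f x\<bar>"
    using sign_step_interval[OF \<eta> _ KA lipW] K A by (simp add: less_imp_le) blast
  have lower: "AE x in I01. 1 / (4 * (K * \<eta>)\<^sup>2) * indicator {a<..<b} x \<le> (f x)\<^sup>2"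
    using solution_square_ge_on_interval[OF gr lip K x\<^sub>0' fi eq \<eta>(1)] near big by blast
  have "1 / (4 * (K * \<eta>)\<^sup>2) * (b - a) \<le> Q"
    unfolding Q_def using f ab(2) \<eta>(1) unfolding L2_def
    by (intro integral_ge_on_interval[OF _ ab(1) _ lower]) auto
  moreover have "Q + 1 \<le> 1 / (4 * (K * \<eta>)\<^sup>2) * \<eta>"
  proof -
    have "\<eta> \<le> 1 / (4 * K\<^sup>2 * (Q + 1))" unfolding \<eta>_def by simp
    then have "(Q + 1) * (4 * K\<^sup>2 * \<eta>) \<le> 1"
      using K Q by (simp add: le_divide_eq mult_ac)
    then have "Q + 1 \<le> 1 / (4 * K\<^sup>2 * \<eta>)"
      using K \<eta>(1) by (simp add: le_divide_eq)
    also have "\<dots> = 1 / (4 * (K * \<eta>)\<^sup>2) * \<eta>"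
      using \<eta>(1) by (simp add: power2_eq_square)
    finally show ?thesis .
  qed
  ultimately show False using ab(2) by simp
qed

lemma deg_in_spec:
  assumes "graphon w" "lipschitz_kernel K w" "0 < K" "x\<^sub>0 \<in> {0<..<1}"
  shows "deg w x\<^sub>0 \<in> spec w"
  unfolding spec_def using L2_sign_step sign_step_notin_range_lap_minus_deg[OF assms] by blast

lemma deg_not_constant_on_interval:
  assumes "assm_A3 w" "a < b" "{a<..<b} \<subseteq> {0..1}"
  obtains x where "x \<in> {a<..<b}" "deg w x \<noteq> c"
proof (rule ccontr)
  assume "\<not> thesis"
  with that have const: "\<And>x. x \<in> {a<..<b} \<Longrightarrow> deg w x = c" by blast
  have "{a<..<b} \<subseteq> {x\<in>{0..1}. (deg w has_real_derivative 0) (at x within {0..1})}"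
  proof
    fix x assume x: "x \<in> {a<..<b}"
    have "(deg w has_real_derivative 0) (at x)"
      by (rule has_field_derivative_transform_within_open[OF DERIV_const, where S="{a<..<b}"])
         (use x const in auto)
    then show "x \<in> {x\<in>{0..1}. (deg w has_real_derivative 0) (at x within {0..1})}"
      using x assms(3) by (auto intro: has_field_derivative_at_within)
  qed
  then have "countable {a<..<b}"
    using assms(1) countable_subset unfolding assm_A3_def by blast
  then show False using assms(2) uncountable_open_interval by blast
qed

lemma isolated_in_spec_notin_deg_range:
  assumes gr: "graphon w" and lip: "lipschitz_kernel K w" and K: "0 < K" and A3: "assm_A3 w"
    and e: "0 < e" and iso: "\<forall>\<mu>\<in>spec w. \<bar>\<mu> - lam\<bar> < e \<longrightarrow> \<mu> = lam"
  shows "lam \<notin> deg w ` {0..1}"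
proof
  assume "lam \<in> deg w ` {0..1}"
  then obtain x\<^sub>1 where x\<^sub>1: "x\<^sub>1 \<in> {0..1}" "lam = deg w x\<^sub>1" by blast
  define \<eta> where "\<eta> = e / (2 * K)"
  have \<eta>: "0 < \<eta>" "K * \<eta> < e" unfolding \<eta>_def using e K by simp_all
  have "max 0 (x\<^sub>1 - \<eta>) < min 1 (x\<^sub>1 + \<eta>)" "{max 0 (x\<^sub>1 - \<eta>)<..<min 1 (x\<^sub>1 + \<eta>)} \<subseteq> {0..1}"
    using x\<^sub>1(1) \<eta>(1) by auto
  then obtain x\<^sub>0 where x\<^sub>0: "x\<^sub>0 \<in> {max 0 (x\<^sub>1 - \<eta>)<..<min 1 (x\<^sub>1 + \<eta>)}" "deg w x\<^sub>0 \<noteq> lam"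
    by (rule deg_not_constant_on_interval[OF A3])
  have "\<bar>deg w x\<^sub>0 - lam\<bar> \<le> K * \<bar>x\<^sub>0 - x\<^sub>1\<bar>"
    using deg_lipschitz[OF gr lip _ _ x\<^sub>1(1), of x\<^sub>0] x\<^sub>0(1) K x\<^sub>1(2) by simp
  also have "\<dots> \<le> K * \<eta>" using x\<^sub>0(1) K by (intro mult_left_mono) auto
  finally have "\<bar>deg w x\<^sub>0 - lam\<bar> < e" using \<eta>(2) by simp
  moreover have "deg w x\<^sub>0 \<in> spec w" using x\<^sub>0(1) by (intro deg_in_spec[OF gr lip K]) auto
  ultimately show False using iso x\<^sub>0(2) by blast
qed

theorem mainTheorem6:
  fixes w :: "real \<Rightarrow> real \<Rightarrow> real" and lam2 :: real
  assumes "graphon w" and "robinsonian w"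
    and "assm_A1 w" and "assm_A2 w" and "assm_A3 w" and "assm_A4 w"
    and "fiedler_value w lam2"
  shows "lam2 \<notin> deg w ` {0..1}"
proof -
  obtain K where "0 < K" "lipschitz_kernel K w"
    using \<open>assm_A1 w\<close> unfolding assm_A1_def lipschitz_kernel_def by blast
  moreover obtain e where "0 < e" "\<forall>\<mu>\<in>spec w. \<bar>\<mu> - lam2\<bar> < e \<longrightarrow> \<mu> = lam2"
    using \<open>fiedler_value w lam2\<close> unfolding fiedler_value_def disc_eigenvalues_def by blast
  ultimately show ?thesis
    using isolated_in_spec_notin_deg_range \<open>graphon w\<close> \<open>assm_A3 w\<close> by blast
qed

end
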